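(* Under the setting below, for all $u,u'\in\Omega_\beta$, $\|S(u)-S(u')\|^2\ge\sigma\|u-u'\|^2$.
   Context: Let $k\ge2$, $L,\beta>0$, $\sigma>1$, $C_1,C_2>1$, and $\Phi_0:(-L-\beta,L+\beta)^k\to\mathbb R$ of class $C^2$ with, for all $x$ in its domain, $(\partial_1\Phi_0(x))^2\ge C_1^{k-1}C_2\sigma^k$ and $(\partial_j\Phi_0(x))^2\le\frac{(C_1-1)(C_2-1)}{k-1}\sigma$ for $2\le j\le k$. Let $\gamma>0$ with $\gamma^{-2}=C_1\sigma$, $\Gamma(x)=(\gamma^{-(j-1)}x_j)_{j=1}^k$, $\Omega_\beta=\Gamma^{-1}((-L-\beta,L+\beta)^k)$, and $S:\Omega_\beta\to\mathbb R^k$, $S(u)=(u_2/\gamma,\dots,u_k/\gamma,\gamma^{k-1}\Phi_0(\Gamma u))$. $\|\cdot\|$ is the Euclidean norm. (In the paper, $\sigma$ is moreover chosen larger than a threshold $S_k(k+2)$; this is not used here.) *)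

theory Defs
  imports "HOL-Analysis.Analysis"
begin

text \<open>Coordinates of \<open>real^'n\<close> are enumerated as \<open>x_1,...,x_k\<close> via a bijection
  \<open>e :: nat \<Rightarrow> 'n\<close> from \<open>{1..k}\<close> onto the index type, so \<open>x_j = x $ e j\<close>.\<close>

definition C2_on :: "'a::euclidean_space set \<Rightarrow> ('a \<Rightarrow> real) \<Rightarrow> bool" where
  "C2_on S f \<longleftrightarrow> (\<exists>(f' :: 'a \<Rightarrow> 'a \<Rightarrow>\<^sub>L real) (f'' :: 'a \<Rightarrow> 'a \<Rightarrow>\<^sub>L ('a \<Rightarrow>\<^sub>L real)).
      (\<forall>x\<in>S. (f has_derivative blinfun_apply (f' x)) (at x) \<and>
              (f' has_derivative blinfun_apply (f'' x)) (at x)) \<and>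
      continuous_on S f'')"

definition partial_j :: "(nat \<Rightarrow> 'n::finite) \<Rightarrow> nat \<Rightarrow> (real^'n \<Rightarrow> real) \<Rightarrow> real^'n \<Rightarrow> real" where
  "partial_j e j f x = frechet_derivative f (at x) (axis (e j) 1)"

definition cube :: "real \<Rightarrow> (real^'n::finite) set" where
  "cube a = {x. \<forall>i. -a < x $ i \<and> x $ i < a}"

definition Gam :: "nat \<Rightarrow> (nat \<Rightarrow> 'n::finite) \<Rightarrow> real \<Rightarrow> real^'n \<Rightarrow> real^'n" where
  "Gam k e \<gamma> x = (\<chi> i. (inverse \<gamma>) ^ (inv_into {1..k} e i - 1) * x $ i)"

definition Smap :: "nat \<Rightarrow> (nat \<Rightarrow> 'n::finite) \<Rightarrow> real \<Rightarrow> (real^'n \<Rightarrow> real) \<Rightarrow> real^'n \<Rightarrow> real^'n" where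
  "Smap k e \<gamma> \<Phi>0 u = (\<chi> i. let j = inv_into {1..k} e i in
      if j < k then u $ e (j + 1) / \<gamma> else \<gamma> ^ (k - 1) * \<Phi>0 (Gam k e \<gamma> u))"

end

theory Submission
  imports Defs
begin

(* Write d = u - u'. The first k - 1 components of S(u) - S(u') are d_j / gamma (j >= 2), contributing
   C1 sigma sum_{j>=2} d_j^2. By the mean value theorem on the segment from Gamma u' to Gamma u, the
   last component is A + B with A = gamma^(k-1) p_1 d_1 and B = sum_{j>=2} gamma^(k-j) p_j d_j, where
   p_j are the partial derivatives of Phi0 at an intermediate point. Since gamma^2 C1 sigma = 1, the
   bound on p_1 gives A^2 >= C2 sigma d_1^2; Cauchy-Schwarz and gamma <= 1 give
   B^2 <= (C1 - 1)(C2 - 1) sigma sum_{j>=2} d_j^2. Finally (A + B)^2 >= A^2 / C2 - B^2 / (C2 - 1). *)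

lemma power2_add_ge_weighted:
  fixes A B C :: real
  assumes "C > 1"
  shows "A\<^sup>2 / C - B\<^sup>2 / (C - 1) \<le> (A + B)\<^sup>2"
proof -
  have "C * (C - 1) * ((A + B)\<^sup>2 - (A\<^sup>2 / C - B\<^sup>2 / (C - 1))) = ((C - 1) * A + C * B)\<^sup>2"
    using assms by (simp add: field_simps power2_eq_square)
  moreover have "C * (C - 1) > 0"
    using assms by simp
  ultimately show ?thesis
    by (metis diff_ge_0_iff_ge zero_le_mult_iff zero_le_power2 not_less)
qed

lemma sum_mult_power2_le:
  fixes a d :: "'a \<Rightarrow> real" and M :: real
  assumes "\<And>j. j \<in> J \<Longrightarrow> (a j)\<^sup>2 \<le> M"
  shows "(\<Sum>j\<in>J. a j * d j)\<^sup>2 \<le> card J * M * (\<Sum>j\<in>J. (d j)\<^sup>2)"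
proof -
  have "(\<Sum>j\<in>J. a j * d j)\<^sup>2 \<le> (\<Sum>j\<in>J. (a j)\<^sup>2 * (d j)\<^sup>2) * card J"
    using sum_squared_le_sum_of_squares[of "\<lambda>j. a j * d j" J] by (simp add: power_mult_distrib)
  also have "\<dots> \<le> (\<Sum>j\<in>J. M * (d j)\<^sup>2) * card J"
    by (intro mult_right_mono sum_mono) (simp_all add: assms)
  finally show ?thesis
    by (simp add: sum_distrib_left mult_ac)
qed

lemma mean_value_segment:
  fixes f :: "'a::real_normed_vector \<Rightarrow> real"
  assumes "\<And>z. z \<in> closed_segment x y \<Longrightarrow> (f has_derivative f' z) (at z)"
  shows "\<exists>z\<in>closed_segment x y. f y - f x = f' z (y - x)"
proof -
  let ?g = "\<lambda>t. x + t *\<^sub>R (y - x)"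
  have g_seg: "?g t \<in> closed_segment x y" if "0 \<le> t" "t \<le> 1" for t
    using that unfolding in_segment by (intro exI[of _ t]) (simp add: algebra_simps)
  have "\<exists>t\<in>{0..1}. f (?g 1) - f (?g 0) = f' (?g t) ((1 - 0) *\<^sub>R (y - x))"
  proof (rule mvt_very_simple[where f' = "\<lambda>t h. f' (?g t) (h *\<^sub>R (y - x))"])
    fix t :: real assume t: "0 \<le> t" "t \<le> 1"
    have "(?g has_derivative (\<lambda>h. h *\<^sub>R (y - x))) (at t within {0..1})"
      by (auto intro!: derivative_eq_intros)
    from has_derivative_compose[OF this assms[OF g_seg[OF t]]]
    show "((\<lambda>t. f (?g t)) has_derivative (\<lambda>h. f' (?g t) (h *\<^sub>R (y - x)))) (at t within {0..1})" .
  qed simp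
  then show ?thesis
    using g_seg by auto
qed

lemma linear_coordinate_expansion:
  fixes D :: "real^'n::finite \<Rightarrow> real"
  assumes "linear D"
  shows "D h = (\<Sum>i\<in>UNIV. h $ i * D (axis i 1))"
proof -
  have "D h = D (\<Sum>i\<in>UNIV. h $ i *\<^sub>R axis i 1)"
    using basis_expansion[of h] by (simp add: scalar_mult_eq_scaleR)
  also have "\<dots> = (\<Sum>i\<in>UNIV. h $ i * D (axis i 1))"
    by (simp add: linear_sum[OF assms] linear_scale[OF assms])
  finally show ?thesis .
qed

lemma power2_norm_eq_sum_reindex:
  fixes v :: "real^'n::finite"
  assumes "bij_betw e {1..k} (UNIV :: 'n set)"
  shows "(norm v)\<^sup>2 = (\<Sum>j\<in>{1..k}. (v $ e j)\<^sup>2)"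
proof -
  have "(norm v)\<^sup>2 = (\<Sum>i\<in>UNIV. (v $ i)\<^sup>2)"
    unfolding power2_norm_eq_inner inner_vec_def inner_real_def by (simp add: power2_eq_square)
  then show ?thesis
    using sum.reindex_bij_betw[OF assms, of "\<lambda>i. (v $ i)\<^sup>2"] by simp
qed

lemma leading_term_bound:
  fixes C1 C2 \<sigma> \<gamma> a b :: real
  assumes k: "k \<ge> 1" and \<gamma>_unit: "\<gamma>\<^sup>2 * (C1 * \<sigma>) = 1"
    and a: "a\<^sup>2 \<ge> C1 ^ (k - 1) * C2 * \<sigma> ^ k"
  shows "C2 * \<sigma> * b\<^sup>2 \<le> (\<gamma> ^ (k - 1) * a * b)\<^sup>2"
proof -
  have "C2 * \<sigma> = (\<gamma>\<^sup>2 * (C1 * \<sigma>)) ^ (k - 1) * (C2 * \<sigma>)"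
    using \<gamma>_unit by simp
  also have "\<dots> = (\<gamma>\<^sup>2) ^ (k - 1) * (C1 ^ (k - 1) * C2 * \<sigma> ^ k)"
    using k by (simp add: power_mult_distrib mult_ac flip: power_minus_mult)
  also have "\<dots> \<le> (\<gamma>\<^sup>2) ^ (k - 1) * a\<^sup>2"
    using a by (simp add: mult_left_mono)
  also have "\<dots> = (\<gamma> ^ (k - 1) * a)\<^sup>2"
    by (simp add: power_mult_distrib flip: power_mult) (simp add: mult.commute)
  finally show ?thesis
    by (simp add: power_mult_distrib mult_right_mono)
qed

lemma tail_term_bound:
  fixes \<gamma> M :: real and p d :: "nat \<Rightarrow> real"
  assumes k: "k \<ge> 2" and \<gamma>: "0 < \<gamma>" "\<gamma> \<le> 1"
    and p: "\<And>j. j \<in> {2..k} \<Longrightarrow> (p j)\<^sup>2 \<le> M / real (k - 1)"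
  shows "(\<Sum>j\<in>{2..k}. \<gamma> ^ (k - j) * p j * d j)\<^sup>2 \<le> M * (\<Sum>j\<in>{2..k}. (d j)\<^sup>2)"
proof -
  have "(\<Sum>j\<in>{2..k}. \<gamma> ^ (k - j) * p j * d j)\<^sup>2 \<le> card {2..k} * (M / real (k - 1)) * (\<Sum>j\<in>{2..k}. (d j)\<^sup>2)"
  proof (rule sum_mult_power2_le[where a = "\<lambda>j. \<gamma> ^ (k - j) * p j"])
    fix j assume j: "j \<in> {2..k}"
    have "(\<gamma> ^ (k - j) * p j)\<^sup>2 \<le> (p j)\<^sup>2"
      using \<gamma> by (simp add: power_mult_distrib power_le_one mult_left_le_one_le)
    then show "(\<gamma> ^ (k - j) * p j)\<^sup>2 \<le> M / real (k - 1)"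
      using p[OF j] by (rule order_trans)
  qed
  also have "\<dots> = M * (\<Sum>j\<in>{2..k}. (d j)\<^sup>2)"
    using k by simp
  finally show ?thesis .
qed

lemma expansion_estimate:
  fixes d p :: "nat \<Rightarrow> real" and k :: nat and \<sigma> C1 C2 \<gamma> :: real
  assumes k: "k \<ge> 2" and \<sigma>: "\<sigma> > 1" and C1: "C1 > 1" and C2: "C2 > 1"
    and \<gamma>: "\<gamma> > 0" and \<gamma>2: "inverse (\<gamma>\<^sup>2) = C1 * \<sigma>"
    and p1: "(p 1)\<^sup>2 \<ge> C1 ^ (k - 1) * C2 * \<sigma> ^ k"
    and pj: "\<And>j. j \<in> {2..k} \<Longrightarrow> (p j)\<^sup>2 \<le> (C1 - 1) * (C2 - 1) / real (k - 1) * \<sigma>"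
  shows "\<sigma> * (\<Sum>j\<in>{1..k}. (d j)\<^sup>2)
    \<le> (\<Sum>j\<in>{2..k}. (d j / \<gamma>)\<^sup>2) + (\<Sum>j\<in>{1..k}. \<gamma> ^ (k - j) * p j * d j)\<^sup>2"
proof -
  define A where "A = \<gamma> ^ (k - 1) * p 1 * d 1"
  define B where "B = (\<Sum>j\<in>{2..k}. \<gamma> ^ (k - j) * p j * d j)"
  define Q where "Q = (\<Sum>j\<in>{2..k}. (d j)\<^sup>2)"
  have \<gamma>_unit: "\<gamma>\<^sup>2 * (C1 * \<sigma>) = 1"
    using \<gamma>2 \<gamma> by (simp add: field_simps)
  then have "\<gamma>\<^sup>2 \<le> 1"
    using C1 \<sigma> by (metis less_1_mult less_eq_real_def not_le)
  then have "\<gamma> \<le> 1"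
    using \<gamma> by (simp add: power_le_one_iff)
  have "\<sigma> * (d 1)\<^sup>2 \<le> A\<^sup>2 / C2"
    using leading_term_bound[OF _ \<gamma>_unit p1, of "d 1"] k C2
    unfolding A_def by (simp add: pos_le_divide_eq mult_ac)
  moreover have "B\<^sup>2 / (C2 - 1) \<le> (C1 - 1) * \<sigma> * Q"
    using tail_term_bound[OF k \<gamma> \<open>\<gamma> \<le> 1\<close>, of p "(C1 - 1) * (C2 - 1) * \<sigma>" d] pj C2
    unfolding B_def Q_def by (simp add: pos_divide_le_eq mult_ac)
  ultimately have "\<sigma> * (d 1)\<^sup>2 - (C1 - 1) * \<sigma> * Q \<le> A\<^sup>2 / C2 - B\<^sup>2 / (C2 - 1)"
    by linarith
  also have "\<dots> \<le> (A + B)\<^sup>2"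
    using C2 by (rule power2_add_ge_weighted)
  finally have "\<sigma> * (d 1)\<^sup>2 - (C1 - 1) * \<sigma> * Q \<le> (A + B)\<^sup>2" .
  moreover have "(\<Sum>j\<in>{2..k}. (d j / \<gamma>)\<^sup>2) = C1 * \<sigma> * Q"
    unfolding Q_def sum_distrib_left
    by (simp add: power_divide flip: \<gamma>2) (simp add: divide_inverse mult.commute)
  moreover have "{1..k} = insert 1 {2..k}"
    using k by auto
  ultimately show ?thesis
    unfolding A_def B_def Q_def by (simp add: algebra_simps)
qed

lemma partial_j_eq:
  assumes "(f has_derivative D) (at x)"
  shows "partial_j e j f x = D (axis (e j) 1)"
  using frechet_derivative_at[OF assms] by (simp add: partial_j_def)

lemma has_derivative_partial_j_expansion:
  fixes f :: "real^'n::finite \<Rightarrow> real"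
  assumes D: "(f has_derivative D) (at x)" and e: "bij_betw e {1..k} (UNIV :: 'n set)"
  shows "D h = (\<Sum>j\<in>{1..k}. h $ e j * partial_j e j f x)"
proof -
  have "D h = (\<Sum>i\<in>UNIV. h $ i * D (axis i 1))"
    using D by (intro linear_coordinate_expansion has_derivative_linear)
  also have "\<dots> = (\<Sum>j\<in>{1..k}. h $ e j * D (axis (e j) 1))"
    using sum.reindex_bij_betw[OF e, of "\<lambda>i. h $ i * D (axis i 1)"] by simp
  finally show ?thesis
    using partial_j_eq[OF D] by simp
qed

lemma convex_cube: "convex (cube a :: (real^'n::finite) set)"
proof -
  have "{x::real. -a < x \<and> x < a} = {-a<..<a}"
    by auto
  then show ?thesis
    unfolding cube_def by (intro convex_box_cart) simp
qed

lemma C2_on_mean_value_partials: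
  fixes f :: "real^'n::finite \<Rightarrow> real"
  assumes f: "C2_on (cube a) f" and e: "bij_betw e {1..k} (UNIV :: 'n set)"
    and x: "x \<in> cube a" and y: "y \<in> cube a"
  shows "\<exists>\<xi>\<in>cube a. f y - f x = (\<Sum>j\<in>{1..k}. (y - x) $ e j * partial_j e j f \<xi>)"
proof -
  obtain D :: "(real^'n) \<Rightarrow> (real^'n) \<Rightarrow>\<^sub>L real"
    where D: "\<And>z. z \<in> cube a \<Longrightarrow> (f has_derivative D z) (at z)"
    using f unfolding C2_on_def by blast
  have seg: "closed_segment x y \<subseteq> cube a"
    using convex_cube x y by (meson convex_contains_segment)
  have "\<exists>\<xi>\<in>closed_segment x y. f y - f x = D \<xi> (y - x)"
    using D seg by (intro mean_value_segment) auto
  then obtain \<xi> where \<xi>: "\<xi> \<in> cube a" and mv: "f y - f x = D \<xi> (y - x)"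
    using seg by blast
  show ?thesis
    using \<xi> mv has_derivative_partial_j_expansion[OF D[OF \<xi>] e] by auto
qed

lemma Gam_nth:
  assumes "bij_betw e {1..k} (UNIV :: 'n::finite set)" "j \<in> {1..k}"
  shows "Gam k e \<gamma> x $ e j = inverse \<gamma> ^ (j - 1) * x $ e j"
  using assms by (simp add: Gam_def bij_betw_inv_into_left)

lemma power_mult_sum_Gam_diff:
  fixes q :: "nat \<Rightarrow> real"
  assumes e: "bij_betw e {1..k} (UNIV :: 'n::finite set)" and \<gamma>: "\<gamma> \<noteq> 0"
  shows "\<gamma> ^ (k - 1) * (\<Sum>j\<in>{1..k}. (Gam k e \<gamma> x - Gam k e \<gamma> y) $ e j * q j)
    = (\<Sum>j\<in>{1..k}. \<gamma> ^ (k - j) * q j * (x - y) $ e j)"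
  unfolding sum_distrib_left
proof (rule sum.cong[OF refl])
  fix j assume j: "j \<in> {1..k}"
  have "\<gamma> ^ (k - 1) = \<gamma> ^ (k - j) * \<gamma> ^ (j - 1)"
    using j by (simp flip: power_add)
  then have pow: "\<gamma> ^ (k - j) = \<gamma> ^ (k - 1) * inverse \<gamma> ^ (j - 1)"
    using \<gamma> by (simp add: power_inverse)
  have diff: "(Gam k e \<gamma> x - Gam k e \<gamma> y) $ e j = inverse \<gamma> ^ (j - 1) * (x - y) $ e j"
    by (simp add: Gam_nth[OF e j] right_diff_distrib)
  show "\<gamma> ^ (k - 1) * ((Gam k e \<gamma> x - Gam k e \<gamma> y) $ e j * q j) = \<gamma> ^ (k - j) * q j * (x - y) $ e j"
    unfolding diff pow by (simp only: mult_ac)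
qed

lemma Smap_nth:
  assumes "bij_betw e {1..k} (UNIV :: 'n::finite set)" "j \<in> {1..k}"
  shows "Smap k e \<gamma> \<Phi> u $ e j = (if j < k then u $ e (j + 1) / \<gamma> else \<gamma> ^ (k - 1) * \<Phi> (Gam k e \<gamma> u))"
  using assms by (simp add: Smap_def bij_betw_inv_into_left)

lemma power2_norm_Smap_diff:
  fixes u u' :: "real^'n::finite"
  assumes k: "k \<ge> 1" and e: "bij_betw e {1..k} (UNIV :: 'n set)"
  shows "(norm (Smap k e \<gamma> \<Phi> u - Smap k e \<gamma> \<Phi> u'))\<^sup>2
    = (\<Sum>j\<in>{2..k}. ((u - u') $ e j / \<gamma>)\<^sup>2) + (\<gamma> ^ (k - 1) * (\<Phi> (Gam k e \<gamma> u) - \<Phi> (Gam k e \<gamma> u')))\<^sup>2"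
proof -
  obtain n where n: "k = Suc n"
    using k by (cases k) auto
  let ?v = "Smap k e \<gamma> \<Phi> u - Smap k e \<gamma> \<Phi> u'"
  have "(norm ?v)\<^sup>2 = (\<Sum>j\<in>{1..n}. (?v $ e j)\<^sup>2) + (?v $ e k)\<^sup>2"
    using power2_norm_eq_sum_reindex[OF e] n by simp
  also have "(\<Sum>j\<in>{1..n}. (?v $ e j)\<^sup>2) = (\<Sum>j\<in>{1..n}. ((u - u') $ e (Suc j) / \<gamma>)\<^sup>2)"
    using e n by (intro sum.cong) (simp_all add: Smap_nth diff_divide_distrib)
  also have "\<dots> = (\<Sum>j\<in>{2..k}. ((u - u') $ e j / \<gamma>)\<^sup>2)"
    using sum.shift_bounds_cl_Suc_ivl[of "\<lambda>j. ((u - u') $ e j / \<gamma>)\<^sup>2" 1 n] n by (simp add: numeral_2_eq_2)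
  also have "(?v $ e k)\<^sup>2 = (\<gamma> ^ (k - 1) * (\<Phi> (Gam k e \<gamma> u) - \<Phi> (Gam k e \<gamma> u')))\<^sup>2"
    using e k by (simp add: Smap_nth right_diff_distrib)
  finally show ?thesis .
qed

theorem proposition3p1:
  fixes k :: nat and e :: "nat \<Rightarrow> 'n::finite"
    and L \<beta> \<sigma> C1 C2 \<gamma> :: real and \<Phi>0 :: "real^'n \<Rightarrow> real"
  assumes k: "k \<ge> 2"
    and e: "bij_betw e {1..k} (UNIV :: 'n set)"
    and L: "L > 0" and \<beta>: "\<beta> > 0" and \<sigma>: "\<sigma> > 1" and C1: "C1 > 1" and C2: "C2 > 1"
    and smooth: "C2_on (cube (L + \<beta>)) \<Phi>0"
    and d1: "\<forall>x \<in> cube (L + \<beta>). (partial_j e 1 \<Phi>0 x)\<^sup>2 \<ge> C1 ^ (k - 1) * C2 * \<sigma> ^ k"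
    and dj: "\<forall>x \<in> cube (L + \<beta>). \<forall>j \<in> {2..k}.
               (partial_j e j \<Phi>0 x)\<^sup>2 \<le> (C1 - 1) * (C2 - 1) / real (k - 1) * \<sigma>"
    and \<gamma>: "\<gamma> > 0" and \<gamma>2: "inverse (\<gamma>\<^sup>2) = C1 * \<sigma>"
    and u: "Gam k e \<gamma> u \<in> cube (L + \<beta>)" and u': "Gam k e \<gamma> u' \<in> cube (L + \<beta>)"
  shows "(norm (Smap k e \<gamma> \<Phi>0 u - Smap k e \<gamma> \<Phi>0 u'))\<^sup>2 \<ge> \<sigma> * (norm (u - u'))\<^sup>2"
proof -
  have k1: "k \<ge> 1"
    using k by simp
  define d where "d j = (u - u') $ e j" for j
  obtain \<xi> where \<xi>: "\<xi> \<in> cube (L + \<beta>)" and mv: "\<Phi>0 (Gam k e \<gamma> u) - \<Phi>0 (Gam k e \<gamma> u')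
      = (\<Sum>j\<in>{1..k}. (Gam k e \<gamma> u - Gam k e \<gamma> u') $ e j * partial_j e j \<Phi>0 \<xi>)"
    using C2_on_mean_value_partials[OF smooth e u' u] by blast
  define p where "p j = partial_j e j \<Phi>0 \<xi>" for j
  have last: "\<gamma> ^ (k - 1) * (\<Phi>0 (Gam k e \<gamma> u) - \<Phi>0 (Gam k e \<gamma> u'))
      = (\<Sum>j\<in>{1..k}. \<gamma> ^ (k - j) * p j * d j)"
    unfolding mv p_def d_def using \<gamma> by (intro power_mult_sum_Gam_diff[OF e]) simp
  have "\<sigma> * (norm (u - u'))\<^sup>2 = \<sigma> * (\<Sum>j\<in>{1..k}. (d j)\<^sup>2)"
    by (simp add: power2_norm_eq_sum_reindex[OF e] d_def)
  also have "\<dots> \<le> (\<Sum>j\<in>{2..k}. (d j / \<gamma>)\<^sup>2) + (\<Sum>j\<in>{1..k}. \<gamma> ^ (k - j) * p j * d j)\<^sup>2"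
    using \<xi> d1 dj by (intro expansion_estimate[OF k \<sigma> C1 C2 \<gamma> \<gamma>2]) (simp_all add: p_def)
  also have "\<dots> = (norm (Smap k e \<gamma> \<Phi>0 u - Smap k e \<gamma> \<Phi>0 u'))\<^sup>2"
    unfolding power2_norm_Smap_diff[OF k1 e] last d_def ..
  finally show ?thesis .
qed

end
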